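(* Let $C^*$ be a random variable with finite second moment and mean $19/6$ satisfying $C^*\overset{d}{=}X^*C'+g(X^*,W^* )$ with $C'$ a copy of $C^*$ independent of $(X^*,W^*,J)$ (in particular the limit law of Theorem "randomrank"). Let $(X_j,W_j,J_j)_{j\ge1}$ be i.i.d. copies of $(X^*,W^*,J)$ and set $Y_j=h_{J_j}(X_j,W_j)$. Then the series $\sum_{j\ge1} Y_j\prod_{k=1}^{j-1}X_k$ converges almost surely and \[ C^* \overset{d}{=} \sum_{j=1}^{\infty} Y_j \prod_{k=1}^{j-1} X_k . \]
   Context: $(X^*,W^* )$ has joint density $f(x,w)=6x$ for $0<x<w<1$ and $0$ elsewhere. $J$ is uniform on $\{1,2,3\}$, independent of $(X^*,W^* )$; $g(X^*,W^* )=h_J(X^*,W^* )$ with $h_1(x,w)=1+w(2-x-w)$, $h_2(x,w)=1+(1+x-w)(2w-x)$, $h_3(x,w)=1+(1-x)(x+w)$. Note $\mathbb E[\ln X^*]=-5/6$. *)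

theory Defs
  imports "HOL-Probability.Probability"
begin

definition hfun :: "nat \<Rightarrow> real \<Rightarrow> real \<Rightarrow> real" where
  "hfun j x w =
     (if j = 1 then 1 + w * (2 - x - w)
      else if j = 2 then 1 + (1 + x - w) * (2 * w - x)
      else if j = 3 then 1 + (1 - x) * (x + w)
      else 0)"

definition XW_law :: "(real \<times> real) measure" where
  "XW_law = density lborel
     (\<lambda>(x, w). ennreal (if 0 < x \<and> x < w \<and> w < 1 then 6 * x else 0))"

definition J_law :: "nat measure" where
  "J_law = measure_pmf (pmf_of_set {1, 2, 3})"

definition XWJ_law :: "((real \<times> real) \<times> nat) measure" where
  "XWJ_law = XW_law \<Otimes>\<^sub>M J_law"

end

theory Submission imports Defs begin

text \<open>
  The law \<mu> of \<open>C\<^sup>*\<close> is a fixed point of the random affine map \<open>c \<mapsto> X c + g\<close>. Composing n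
  independent copies of this map backwards and feeding in an independent copy of \<open>C\<^sup>*\<close>
  therefore again produces the law \<mu> (Letac's principle). Since \<open>E X\<^sup>* < 1\<close>, the products
  \<open>\<Prod>k<j. X\<^sub>k\<close> have geometrically decaying expectations, so they are a.s. summable; as g is
  bounded on the support, the backward iterates converge a.s., for every starting value, to the
  perpetuity series. An a.s. limit of random variables with a common law has that law, which
  identifies the law of the series with \<mu>.
\<close>

text \<open>\<open>backward_iterate f n z c = f (z 0) (f (z 1) (\<dots> (f (z (n - 1)) c)))\<close>\<close>

primrec backward_iterate :: "('q \<Rightarrow> real \<Rightarrow> real) \<Rightarrow> nat \<Rightarrow> (nat \<Rightarrow> 'q) \<Rightarrow> real \<Rightarrow> real" where
  "backward_iterate f 0 z c = c"
| "backward_iterate f (Suc n) z c = backward_iterate f n z (f (z n) c)"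

lemma backward_iterate_cong:
  "(\<And>i. i < n \<Longrightarrow> z i = z' i) \<Longrightarrow> backward_iterate f n z c = backward_iterate f n z' c"
  by (induction n arbitrary: c) auto

lemma measurable_backward_iterate:
  assumes f: "(\<lambda>(q, c). f q c) \<in> borel_measurable (Q \<Otimes>\<^sub>M borel)"
    and z: "\<And>i. i < n \<Longrightarrow> (\<lambda>x. z x i) \<in> measurable K Q"
    and h: "h \<in> borel_measurable K"
  shows "(\<lambda>x. backward_iterate f n (z x) (h x)) \<in> borel_measurable K"
  using z h
proof (induction n arbitrary: h)
  case 0
  then show ?case by simp
next
  case (Suc n)
  have [measurable]: "(\<lambda>x. z x n) \<in> measurable K Q" "h \<in> borel_measurable K"
    using Suc.prems by auto
  have "(\<lambda>x. f (z x n) (h x)) \<in> borel_measurable K"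
    using measurable_compose[OF _ f, of "\<lambda>x. (z x n, h x)"] by simp
  with Suc.prems show ?case
    by (simp add: Suc.IH)
qed

lemma measurable_backward_iterate_PiM:
  assumes f: "(\<lambda>(q, c). f q c) \<in> borel_measurable (Q \<Otimes>\<^sub>M borel)"
    and "{..<n} \<subseteq> I" and K: "sets K = sets (borel :: real measure)"
  shows "(\<lambda>(z, c). backward_iterate f n z c) \<in> borel_measurable (Pi\<^sub>M I (\<lambda>_. Q) \<Otimes>\<^sub>M K)"
proof -
  have "(\<lambda>x. fst x i) \<in> measurable (Pi\<^sub>M I (\<lambda>_. Q) \<Otimes>\<^sub>M K) Q" if "i < n" for i
    using that assms(2) by (intro measurable_compose[OF measurable_fst measurable_component_singleton]) auto
  moreover have "snd \<in> borel_measurable (Pi\<^sub>M I (\<lambda>_. Q) \<Otimes>\<^sub>M K)"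
    using measurable_snd[of "Pi\<^sub>M I (\<lambda>_. Q)" K] unfolding measurable_cong_sets[OF refl K] .
  ultimately show ?thesis
    unfolding split_beta' by (rule measurable_backward_iterate[OF f, where z=fst and h=snd])
qed

lemma nn_integral_random_map_fixpoint:
  fixes \<mu> :: "real measure"
  assumes \<mu>: "prob_space \<mu>" "sets \<mu> = sets borel"
    and f: "(\<lambda>(q, c). f q c) \<in> borel_measurable (Q \<Otimes>\<^sub>M borel)"
    and fixpoint: "\<mu> = distr (Q \<Otimes>\<^sub>M \<mu>) borel (\<lambda>(q, c). f q c)"
    and h[measurable]: "h \<in> borel_measurable borel"
  shows "(\<integral>\<^sup>+q. (\<integral>\<^sup>+c. h (f q c) \<partial>\<mu>) \<partial>Q) = (\<integral>\<^sup>+c. h c \<partial>\<mu>)"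
proof -
  interpret mu: prob_space \<mu> by fact
  have [measurable]: "(\<lambda>(q, c). f q c) \<in> borel_measurable (Q \<Otimes>\<^sub>M \<mu>)"
    using f by (simp add: measurable_cong_sets[OF sets_pair_measure_cong[OF refl \<mu>(2)] refl])
  have hf: "(\<lambda>(q, c). h (f q c)) \<in> borel_measurable (Q \<Otimes>\<^sub>M \<mu>)"
    by measurable
  have "(\<integral>\<^sup>+q. (\<integral>\<^sup>+c. h (f q c) \<partial>\<mu>) \<partial>Q) = (\<integral>\<^sup>+p. (\<lambda>(q, c). h (f q c)) p \<partial>(Q \<Otimes>\<^sub>M \<mu>))"
    using mu.nn_integral_fst[OF hf] by simp
  also have "\<dots> = (\<integral>\<^sup>+c. h c \<partial>distr (Q \<Otimes>\<^sub>M \<mu>) borel (\<lambda>(q, c). f q c))"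
    by (subst nn_integral_distr) (auto simp: split_beta')
  finally show ?thesis
    using fixpoint by simp
qed

lemma nn_integral_backward_iterate_Suc:
  fixes \<mu> :: "real measure"
  assumes Q: "prob_space Q" and \<mu>: "prob_space \<mu>" "sets \<mu> = sets borel"
    and f: "(\<lambda>(q, c). f q c) \<in> borel_measurable (Q \<Otimes>\<^sub>M borel)"
    and fixpoint: "\<mu> = distr (Q \<Otimes>\<^sub>M \<mu>) borel (\<lambda>(q, c). f q c)"
    and g[measurable]: "g \<in> borel_measurable borel"
  shows "(\<integral>\<^sup>+z. (\<integral>\<^sup>+c. g (backward_iterate f (Suc n) z c) \<partial>\<mu>) \<partial>Pi\<^sub>M {..<Suc n} (\<lambda>_. Q))
    = (\<integral>\<^sup>+z. (\<integral>\<^sup>+c. g (backward_iterate f n z c) \<partial>\<mu>) \<partial>Pi\<^sub>M {..<n} (\<lambda>_. Q))"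
proof -
  interpret PQ: product_prob_space "\<lambda>_::nat. Q"
    by (simp add: Q product_prob_space_def product_prob_space_axioms_def
        product_sigma_finite_def prob_space_imp_sigma_finite)
  interpret mu: prob_space \<mu> by fact
  have f_\<mu>[measurable]: "(\<lambda>(q, c). f q c) \<in> borel_measurable (Q \<Otimes>\<^sub>M \<mu>)"
    using f by (simp add: measurable_cong_sets[OF sets_pair_measure_cong[OF refl \<mu>(2)] refl])
  have iter_meas: "(\<lambda>p. g (backward_iterate f m (fst p) (snd p)))
      \<in> borel_measurable (Pi\<^sub>M I (\<lambda>_. Q) \<Otimes>\<^sub>M \<mu>)" if "{..<m} \<subseteq> I" for m I
    using measurable_compose[OF measurable_backward_iterate_PiM[OF f that \<mu>(2)] g] by (simp add: split_beta')
  have U: "{..<Suc n} = {..<n} \<union> {n}" by auto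
  have "(\<lambda>z. \<integral>\<^sup>+c. g (backward_iterate f (Suc n) z c) \<partial>\<mu>) \<in> borel_measurable (Pi\<^sub>M ({..<n} \<union> {n}) (\<lambda>_. Q))"
    using mu.borel_measurable_nn_integral_fst[OF iter_meas[OF equalityD1[OF U]]] by simp
  then have "(\<integral>\<^sup>+z. (\<integral>\<^sup>+c. g (backward_iterate f (Suc n) z c) \<partial>\<mu>) \<partial>Pi\<^sub>M {..<Suc n} (\<lambda>_. Q))
     = (\<integral>\<^sup>+x. (\<integral>\<^sup>+y. (\<integral>\<^sup>+c. g (backward_iterate f (Suc n) (merge {..<n} {n} (x, y)) c) \<partial>\<mu>)
          \<partial>Pi\<^sub>M {n} (\<lambda>_. Q)) \<partial>Pi\<^sub>M {..<n} (\<lambda>_. Q))"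
    unfolding U by (rule PQ.product_nn_integral_fold[rotated 3]) auto
  also have "\<dots> = (\<integral>\<^sup>+x. (\<integral>\<^sup>+y. (\<integral>\<^sup>+c. g (backward_iterate f n x (f (y n) c)) \<partial>\<mu>)
          \<partial>Pi\<^sub>M {n} (\<lambda>_. Q)) \<partial>Pi\<^sub>M {..<n} (\<lambda>_. Q))"
    by (intro nn_integral_cong arg_cong[where f=g])
      (auto simp: merge_def intro: backward_iterate_cong)
  also have "\<dots> = (\<integral>\<^sup>+x. (\<integral>\<^sup>+c. g (backward_iterate f n x c) \<partial>\<mu>) \<partial>Pi\<^sub>M {..<n} (\<lambda>_. Q))"
  proof (intro nn_integral_cong)
    fix x assume x: "x \<in> space (Pi\<^sub>M {..<n} (\<lambda>_. Q))"
    have gx[measurable]: "(\<lambda>c. g (backward_iterate f n x c)) \<in> borel_measurable borel"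
      using measurable_Pair2[OF iter_meas[OF order_refl] x]
      by (simp add: measurable_cong_sets[OF \<mu>(2) refl])
    have "(\<lambda>(q, c). g (backward_iterate f n x (f q c))) \<in> borel_measurable (Q \<Otimes>\<^sub>M \<mu>)"
      using measurable_compose[OF f_\<mu> gx] by (simp add: split_beta')
    then have "(\<integral>\<^sup>+y. (\<integral>\<^sup>+c. g (backward_iterate f n x (f (y n) c)) \<partial>\<mu>) \<partial>Pi\<^sub>M {n} (\<lambda>_. Q))
        = (\<integral>\<^sup>+q. (\<integral>\<^sup>+c. g (backward_iterate f n x (f q c)) \<partial>\<mu>) \<partial>Q)"
      using mu.borel_measurable_nn_integral_fst
      by (subst PQ.distr_singleton[symmetric, of n]) (auto simp: nn_integral_distr split_beta')
    also have "\<dots> = (\<integral>\<^sup>+c. g (backward_iterate f n x c) \<partial>\<mu>)"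
      by (rule nn_integral_random_map_fixpoint[OF \<mu> f fixpoint gx])
    finally show "(\<integral>\<^sup>+y. (\<integral>\<^sup>+c. g (backward_iterate f n x (f (y n) c)) \<partial>\<mu>) \<partial>Pi\<^sub>M {n} (\<lambda>_. Q))
        = (\<integral>\<^sup>+c. g (backward_iterate f n x c) \<partial>\<mu>)" .
  qed
  finally show ?thesis .
qed

lemma nn_integral_backward_iterate_fixpoint:
  fixes \<mu> :: "real measure"
  assumes Q: "prob_space Q" and \<mu>: "prob_space \<mu>" "sets \<mu> = sets borel"
    and f: "(\<lambda>(q, c). f q c) \<in> borel_measurable (Q \<Otimes>\<^sub>M borel)"
    and fixpoint: "\<mu> = distr (Q \<Otimes>\<^sub>M \<mu>) borel (\<lambda>(q, c). f q c)"
    and g: "g \<in> borel_measurable borel"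
  shows "(\<integral>\<^sup>+z. (\<integral>\<^sup>+c. g (backward_iterate f n z c) \<partial>\<mu>) \<partial>Pi\<^sub>M {..<n} (\<lambda>_. Q)) = (\<integral>\<^sup>+c. g c \<partial>\<mu>)"
proof (induction n)
  case 0
  interpret PQ: product_prob_space "\<lambda>_::nat. Q"
    by (simp add: Q product_prob_space_def product_prob_space_axioms_def
        product_sigma_finite_def prob_space_imp_sigma_finite)
  have "prob_space (Pi\<^sub>M {} (\<lambda>_::nat. Q))"
    by (rule prob_space_PiM) (simp add: Q)
  then show ?case
    by (simp add: PQ.nn_integral_empty prob_space.emeasure_space_1)
next
  case (Suc n)
  then show ?case
    by (simp only: nn_integral_backward_iterate_Suc[OF assms])
qed

lemma distr_backward_iterate_fixpoint:
  fixes \<mu> :: "real measure"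
  assumes Q: "prob_space Q" and \<mu>: "prob_space \<mu>" "sets \<mu> = sets borel"
    and f: "(\<lambda>(q, c). f q c) \<in> borel_measurable (Q \<Otimes>\<^sub>M borel)"
    and fixpoint: "\<mu> = distr (Q \<Otimes>\<^sub>M \<mu>) borel (\<lambda>(q, c). f q c)"
  shows "distr (Pi\<^sub>M {..<n} (\<lambda>_. Q) \<Otimes>\<^sub>M \<mu>) borel (\<lambda>(z, c). backward_iterate f n z c) = \<mu>"
proof (rule measure_eqI)
  interpret mu: prob_space \<mu> by fact
  let ?P = "Pi\<^sub>M {..<n} (\<lambda>_. Q) \<Otimes>\<^sub>M \<mu>"
  have G[measurable]: "(\<lambda>(z, c). backward_iterate f n z c) \<in> borel_measurable ?P"
    by (rule measurable_backward_iterate_PiM[OF f order_refl \<mu>(2)])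
  show "sets (distr ?P borel (\<lambda>(z, c). backward_iterate f n z c)) = sets \<mu>"
    using \<mu>(2) by simp
  fix A assume "A \<in> sets (distr ?P borel (\<lambda>(z, c). backward_iterate f n z c))"
  then have A[measurable]: "A \<in> sets borel" by simp
  have "emeasure (distr ?P borel (\<lambda>(z, c). backward_iterate f n z c)) A
      = (\<integral>\<^sup>+p. indicator A (backward_iterate f n (fst p) (snd p)) \<partial>?P)"
    using nn_integral_distr[OF G, of "indicator A"] by (simp add: split_beta')
  also have "\<dots> = (\<integral>\<^sup>+z. (\<integral>\<^sup>+c. indicator A (backward_iterate f n z c) \<partial>\<mu>) \<partial>Pi\<^sub>M {..<n} (\<lambda>_. Q))"
    by (subst mu.nn_integral_fst[symmetric]) (auto simp: split_beta')
  also have "\<dots> = emeasure \<mu> A"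
    using \<mu>(2) by (simp add: nn_integral_backward_iterate_fixpoint[OF assms])
  finally show "emeasure (distr ?P borel (\<lambda>(z, c). backward_iterate f n z c)) A = emeasure \<mu> A" .
qed

lemma (in prob_space) distr_eq_of_AE_LIMSEQ:
  assumes \<mu>: "real_distribution \<mu>"
    and Y[measurable]: "\<And>n. Y n \<in> borel_measurable M" and S[measurable]: "S \<in> borel_measurable M"
    and law: "\<And>n. distr M borel (Y n) = \<mu>"
    and lim: "AE x in M. (\<lambda>n. Y n x) \<longlonglongrightarrow> S x"
  shows "distr M borel S = \<mu>"
proof (rule Levy_uniqueness[symmetric, OF \<mu>])
  show "real_distribution (distr M borel S)"
    by (simp add: real_distribution_def real_distribution_axioms_def prob_space_distr)
  have char_distr: "char (distr M borel Z) t = (\<integral>x. iexp (t * Z x) \<partial>M)"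
    if [measurable]: "Z \<in> borel_measurable M" for Z t
    unfolding char_def by (rule integral_distr) auto
  show "char \<mu> = char (distr M borel S)"
  proof
    fix t
    have "(\<lambda>n. \<integral>x. iexp (t * Y n x) \<partial>M) \<longlonglongrightarrow> (\<integral>x. iexp (t * S x) \<partial>M)"
      by (rule integral_dominated_convergence[where w="\<lambda>_. 1"])
        (use lim in \<open>auto intro!: tendsto_intros elim: AE_mp\<close>)
    moreover have "(\<integral>x. iexp (t * Y n x) \<partial>M) = char \<mu> t" for n
      using char_distr[of "Y n" t] law by simp
    ultimately show "char \<mu> t = char (distr M borel S) t"
      by (simp add: char_distr LIMSEQ_const_iff)
  qed
qed

lemma AE_pair_measure_fst:
  assumes N: "sigma_finite_measure N" and P: "AE x in M. P x"
  shows "AE p in M \<Otimes>\<^sub>M N. P (fst p)"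
proof -
  interpret N: sigma_finite_measure N by fact
  obtain B where B: "{x \<in> space M. \<not> P x} \<subseteq> B" "emeasure M B = 0" "B \<in> sets M"
    using P by (auto elim: AE_E)
  have "B \<times> space N \<in> null_sets (M \<Otimes>\<^sub>M N)"
    using B(2,3) by (simp add: N.emeasure_pair_measure_Times null_sets_def)
  then show ?thesis
    by (rule AE_I') (use B(1) in \<open>auto simp: space_pair_measure\<close>)
qed

lemma (in prob_space) distr_backward_iterate_indep:
  fixes Z :: "nat \<Rightarrow> 'a \<Rightarrow> 'q" and \<mu> :: "real measure"
  assumes \<mu>: "prob_space \<mu>" "sets \<mu> = sets borel"
    and f: "(\<lambda>(q, c). f q c) \<in> borel_measurable (Q \<Otimes>\<^sub>M borel)"
    and fixpoint: "\<mu> = distr (Q \<Otimes>\<^sub>M \<mu>) borel (\<lambda>(q, c). f q c)"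
    and Z_meas[measurable]: "\<And>i. Z i \<in> measurable M Q"
    and Z_law: "\<And>i. distr M Q (Z i) = Q"
    and Z_indep: "indep_vars (\<lambda>_. Q) Z UNIV"
  shows "distr (M \<Otimes>\<^sub>M \<mu>) borel (\<lambda>(\<omega>, c). backward_iterate f (Suc n) (\<lambda>k. Z k \<omega>) c) = \<mu>"
proof -
  interpret mu: prob_space \<mu> by fact
  have Q: "prob_space Q"
    using prob_space_distr[OF Z_meas[of 0]] by (simp add: Z_law)
  define P where "P = Pi\<^sub>M {..<Suc n} (\<lambda>_. Q)"
  define V where "V \<omega> = (\<lambda>i\<in>{..<Suc n}. Z i \<omega>)" for \<omega>
  have V_meas[measurable]: "V \<in> measurable M P"
    unfolding V_def P_def by measurable
  \<comment> \<open>Hence \<open>Suc n\<close>: the library identifies independence with a product law only for nonempty index sets.\<close>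
  have "indep_vars (\<lambda>_. Q) Z {..<Suc n}"
    by (rule indep_vars_subset[OF Z_indep]) auto
  then have "distr M P V = P"
    unfolding V_def P_def by (subst indep_vars_iff_distr_eq_PiM'[THEN iffD1]) (auto simp: Z_law)
  then have pair: "distr (M \<Otimes>\<^sub>M \<mu>) (P \<Otimes>\<^sub>M \<mu>) (\<lambda>(\<omega>, c). (V \<omega>, c)) = P \<Otimes>\<^sub>M \<mu>"
    using pair_measure_distr[OF V_meas measurable_ident_sets[OF refl, of \<mu>]]
    by (simp add: mu.sigma_finite_measure_axioms)
  have [measurable]: "(\<lambda>(z, c). backward_iterate f (Suc n) z c) \<in> borel_measurable (P \<Otimes>\<^sub>M \<mu>)"
    unfolding P_def by (rule measurable_backward_iterate_PiM[OF f order_refl \<mu>(2)])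
  have "(\<lambda>(\<omega>, c). backward_iterate f (Suc n) (\<lambda>k. Z k \<omega>) c)
      = (\<lambda>(z, c). backward_iterate f (Suc n) z c) \<circ> (\<lambda>(\<omega>, c). (V \<omega>, c))"
    by (auto simp: fun_eq_iff V_def intro: backward_iterate_cong)
  then have "distr (M \<Otimes>\<^sub>M \<mu>) borel (\<lambda>(\<omega>, c). backward_iterate f (Suc n) (\<lambda>k. Z k \<omega>) c)
      = distr (distr (M \<Otimes>\<^sub>M \<mu>) (P \<Otimes>\<^sub>M \<mu>) (\<lambda>(\<omega>, c). (V \<omega>, c))) borel
          (\<lambda>(z, c). backward_iterate f (Suc n) z c)"
    by (simp only:) (rule distr_distr[symmetric]; measurable)
  also have "\<dots> = distr (P \<Otimes>\<^sub>M \<mu>) borel (\<lambda>(z, c). backward_iterate f (Suc n) z c)"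
    by (simp only: pair)
  also have "\<dots> = \<mu>"
    unfolding P_def by (rule distr_backward_iterate_fixpoint[OF Q \<mu> f fixpoint])
  finally show ?thesis .
qed

lemma (in prob_space) distr_backward_iterate_limit:
  fixes Z :: "nat \<Rightarrow> 'a \<Rightarrow> 'q" and \<mu> :: "real measure"
  assumes \<mu>: "prob_space \<mu>" "sets \<mu> = sets borel"
    and f: "(\<lambda>(q, c). f q c) \<in> borel_measurable (Q \<Otimes>\<^sub>M borel)"
    and fixpoint: "\<mu> = distr (Q \<Otimes>\<^sub>M \<mu>) borel (\<lambda>(q, c). f q c)"
    and Z_meas[measurable]: "\<And>i. Z i \<in> measurable M Q"
    and Z_law: "\<And>i. distr M Q (Z i) = Q"
    and Z_indep: "indep_vars (\<lambda>_. Q) Z UNIV"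
    and S[measurable]: "S \<in> borel_measurable M"
    and lim: "AE \<omega> in M. \<forall>c. (\<lambda>n. backward_iterate f n (\<lambda>k. Z k \<omega>) c) \<longlonglongrightarrow> S \<omega>"
  shows "distr M borel S = \<mu>"
proof -
  interpret mu: prob_space \<mu> by fact
  interpret MN: pair_prob_space M \<mu> ..
  define Y where "Y n = (\<lambda>(\<omega>, c). backward_iterate f (Suc n) (\<lambda>k. Z k \<omega>) c)" for n
  have snd_meas: "snd \<in> borel_measurable (M \<Otimes>\<^sub>M \<mu>)"
    using measurable_snd[of M \<mu>] unfolding measurable_cong_sets[OF refl \<mu>(2)] .
  have Y_meas: "Y n \<in> borel_measurable (M \<Otimes>\<^sub>M \<mu>)" for n
    unfolding Y_def split_beta'
    by (rule measurable_backward_iterate[OF f _ snd_meas, where z="\<lambda>p k. Z k (fst p)"])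
      (rule measurable_compose[OF measurable_fst Z_meas])
  have Y_law: "distr (M \<Otimes>\<^sub>M \<mu>) borel (Y n) = \<mu>" for n
    unfolding Y_def by (rule distr_backward_iterate_indep[OF \<mu> f fixpoint Z_meas Z_law Z_indep])
  have Y_lim: "AE p in M \<Otimes>\<^sub>M \<mu>. (\<lambda>n. Y n p) \<longlonglongrightarrow> S (fst p)"
    using AE_pair_measure_fst[OF mu.sigma_finite_measure_axioms lim]
  proof eventually_elim
    case (elim p)
    then have "(\<lambda>n. backward_iterate f n (\<lambda>k. Z k (fst p)) (snd p)) \<longlonglongrightarrow> S (fst p)"
      by blast
    from LIMSEQ_Suc[OF this] show ?case
      by (simp add: Y_def split_beta' del: backward_iterate.simps)
  qed
  have "distr (M \<Otimes>\<^sub>M \<mu>) borel (S \<circ> fst) = \<mu>"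
    by (rule MN.P.distr_eq_of_AE_LIMSEQ[OF _ Y_meas _ Y_law])
      (use Y_lim in \<open>auto simp: real_distribution_def real_distribution_axioms_def \<mu>\<close>)
  then show ?thesis
    using distr_distr[OF S measurable_fst[of M \<mu>]] by (simp add: mu.distr_pair_fst)
qed

lemma backward_iterate_affine:
  "backward_iterate (\<lambda>q c. a q * c + b q) n z c
     = (\<Sum>j<n. b (z j) * (\<Prod>k<j. a (z k))) + (\<Prod>k<n. a (z k)) * c"
  by (induction n arbitrary: c) (simp_all add: algebra_simps)

lemma backward_iterate_affine_LIMSEQ:
  fixes a b :: "'q \<Rightarrow> real"
  assumes a: "\<And>k. 0 \<le> a (z k)" and b: "\<And>k. \<bar>b (z k)\<bar> \<le> B"
    and summable_prod: "summable (\<lambda>j. \<Prod>k<j. a (z k))"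
  shows "summable (\<lambda>j. b (z j) * (\<Prod>k<j. a (z k)))"
    and "(\<lambda>n. backward_iterate (\<lambda>q c. a q * c + b q) n z c) \<longlonglongrightarrow> (\<Sum>j. b (z j) * (\<Prod>k<j. a (z k)))"
proof -
  show summable: "summable (\<lambda>j. b (z j) * (\<Prod>k<j. a (z k)))"
  proof (rule summable_comparison_test)
    show "\<exists>N. \<forall>n\<ge>N. norm (b (z n) * (\<Prod>k<n. a (z k))) \<le> B * (\<Prod>k<n. a (z k))"
      using a b by (auto simp: abs_mult prod_nonneg intro!: mult_right_mono)
    show "summable (\<lambda>n. B * (\<Prod>k<n. a (z k)))"
      using summable_prod by (rule summable_mult)
  qed
  have "(\<lambda>n. (\<Sum>j<n. b (z j) * (\<Prod>k<j. a (z k))) + (\<Prod>k<n. a (z k)) * c)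
      \<longlonglongrightarrow> (\<Sum>j. b (z j) * (\<Prod>k<j. a (z k))) + 0"
    by (intro tendsto_add summable_LIMSEQ summable tendsto_mult_left_zero
        summable_LIMSEQ_zero summable_prod)
  then show "(\<lambda>n. backward_iterate (\<lambda>q c. a q * c + b q) n z c) \<longlonglongrightarrow> (\<Sum>j. b (z j) * (\<Prod>k<j. a (z k)))"
    by (simp add: backward_iterate_affine)
qed

lemma (in prob_space) AE_summable_prod_indep:
  fixes A :: "nat \<Rightarrow> 'a \<Rightarrow> real"
  assumes indep: "indep_vars (\<lambda>_. borel) A UNIV"
    and nonneg: "AE \<omega> in M. \<forall>k. 0 \<le> A k \<omega>"
    and mean: "\<And>k. (\<integral>\<^sup>+\<omega>. ennreal (A k \<omega>) \<partial>M) = r" and r: "r < 1"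
  shows "AE \<omega> in M. summable (\<lambda>j. \<Prod>k<j. A k \<omega>)"
proof -
  have A[measurable]: "A k \<in> borel_measurable M" for k
    using indep by (simp add: indep_vars_def)
  have "indep_vars (\<lambda>_. borel) (\<lambda>k \<omega>. ennreal (A k \<omega>)) UNIV"
    by (rule indep_vars_compose2[OF indep]) simp
  then have moment: "(\<integral>\<^sup>+\<omega>. (\<Prod>k<j. ennreal (A k \<omega>)) \<partial>M) = r ^ j" for j
    using indep_vars_subset[of _ _ UNIV "{..<j}"]
    by (subst indep_vars_nn_integral) (auto simp: mean)
  obtain r' where r': "r = ennreal r'" "0 \<le> r'" "r' < 1"
    using r by (cases r) (auto simp: top_unique)
  have "(\<integral>\<^sup>+\<omega>. (\<Sum>j. \<Prod>k<j. ennreal (A k \<omega>)) \<partial>M) = (\<Sum>j. ennreal (r' ^ j))"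
    by (subst nn_integral_suminf) (auto simp: moment r' ennreal_power)
  also have "\<dots> = ennreal (\<Sum>j. r' ^ j)"
    using r' by (intro suminf_ennreal2) (auto intro: summable_geometric)
  finally have "AE \<omega> in M. (\<Sum>j. \<Prod>k<j. ennreal (A k \<omega>)) \<noteq> \<infinity>"
    by (intro nn_integral_noteq_infinite) auto
  with nonneg show ?thesis
  proof eventually_elim
    case (elim \<omega>)
    then have "(\<Sum>j. ennreal (\<Prod>k<j. A k \<omega>)) \<noteq> \<top>"
      by (simp add: prod_ennreal)
    then show ?case
      by (rule summable_suminf_not_top[rotated]) (simp add: elim prod_nonneg)
  qed
qed

lemma (in prob_space) nn_integral_less_one:
  assumes [measurable]: "a \<in> borel_measurable M" and a: "AE x in M. 0 \<le> a x \<and> a x < 1"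
  shows "(\<integral>\<^sup>+x. ennreal (a x) \<partial>M) < 1"
proof -
  have le: "AE x in M. ennreal (a x) \<le> 1"
    using a by eventually_elim (simp add: ennreal_le_1)
  have "(\<integral>\<^sup>+x. ennreal (a x) \<partial>M) < (\<integral>\<^sup>+x. 1 \<partial>M)"
  proof (rule nn_integral_less)
    show "(\<integral>\<^sup>+x. ennreal (a x) \<partial>M) \<noteq> \<infinity>"
      using nn_integral_mono_AE[OF le] by (auto simp: emeasure_space_1 top_unique)
    show "\<not> (AE x in M. 1 \<le> ennreal (a x))"
    proof
      assume "AE x in M. 1 \<le> ennreal (a x)"
      with a have "AE x in M. False"
        by eventually_elim (simp add: ennreal_le_iff2 split: if_splits)
      then show False
        by (simp add: AE_False)
    qed
  qed (use le in auto)
  then show ?thesis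
    by (simp add: emeasure_space_1)
qed

lemma (in prob_space) AE_backward_iterate_affine_LIMSEQ:
  fixes Z :: "nat \<Rightarrow> 'a \<Rightarrow> 'q" and a b :: "'q \<Rightarrow> real"
  assumes Z_meas[measurable]: "\<And>i. Z i \<in> measurable M Q"
    and Z_law: "\<And>i. distr M Q (Z i) = Q"
    and Z_indep: "indep_vars (\<lambda>_. Q) Z UNIV"
    and [measurable]: "a \<in> borel_measurable Q" "b \<in> borel_measurable Q"
    and a: "AE q in Q. 0 \<le> a q \<and> a q < 1" and b: "AE q in Q. \<bar>b q\<bar> \<le> B"
  shows "AE \<omega> in M. summable (\<lambda>j. b (Z j \<omega>) * (\<Prod>k<j. a (Z k \<omega>)))
    \<and> (\<forall>c. (\<lambda>n. backward_iterate (\<lambda>q c. a q * c + b q) n (\<lambda>k. Z k \<omega>) c)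
           \<longlonglongrightarrow> (\<Sum>j. b (Z j \<omega>) * (\<Prod>k<j. a (Z k \<omega>))))"
proof -
  have Q: "prob_space Q"
    using prob_space_distr[OF Z_meas[of 0]] by (simp add: Z_law)
  have bounds: "AE \<omega> in M. \<forall>k. 0 \<le> a (Z k \<omega>) \<and> \<bar>b (Z k \<omega>)\<bar> \<le> B"
    unfolding AE_all_countable
  proof
    fix k
    have "AE q in distr M Q (Z k). 0 \<le> a q \<and> \<bar>b q\<bar> \<le> B"
      unfolding Z_law using a b by eventually_elim auto
    then show "AE \<omega> in M. 0 \<le> a (Z k \<omega>) \<and> \<bar>b (Z k \<omega>)\<bar> \<le> B"
      by (subst (asm) AE_distr_iff) simp_all
  qed
  have "AE \<omega> in M. summable (\<lambda>j. \<Prod>k<j. a (Z k \<omega>))"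
  proof (rule AE_summable_prod_indep)
    show "indep_vars (\<lambda>_. borel) (\<lambda>k \<omega>. a (Z k \<omega>)) UNIV"
      by (rule indep_vars_compose2[OF Z_indep]) simp
    show "AE \<omega> in M. \<forall>k. 0 \<le> a (Z k \<omega>)"
      using bounds by eventually_elim blast
    show "(\<integral>\<^sup>+\<omega>. ennreal (a (Z k \<omega>)) \<partial>M) = (\<integral>\<^sup>+q. ennreal (a q) \<partial>Q)" for k
      using nn_integral_distr[OF Z_meas[of k], of "\<lambda>q. ennreal (a q)"] by (simp add: Z_law)
    show "(\<integral>\<^sup>+q. ennreal (a q) \<partial>Q) < 1"
      using a by (intro prob_space.nn_integral_less_one[OF Q]) simp_all
  qed
  with bounds show ?thesis
  proof eventually_elim
    case (elim \<omega>)
    then have "0 \<le> a (Z k \<omega>)" "\<bar>b (Z k \<omega>)\<bar> \<le> B" "summable (\<lambda>j. \<Prod>k<j. a (Z k \<omega>))" for k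
      by auto
    from backward_iterate_affine_LIMSEQ[where z="\<lambda>k. Z k \<omega>" and a=a and b=b, OF this]
    show ?case by blast
  qed
qed

lemma sets_XWJ_law:
  "sets XWJ_law = sets ((borel \<Otimes>\<^sub>M borel) \<Otimes>\<^sub>M count_space (UNIV :: nat set))"
  unfolding XWJ_law_def J_law_def XW_law_def borel_prod
  by (intro sets_pair_measure_cong) simp_all

lemma measurable_XWJ_law_x[measurable]:
  "(\<lambda>q. fst (fst q)) \<in> borel_measurable XWJ_law"
  unfolding measurable_cong_sets[OF sets_XWJ_law refl] by measurable

lemma measurable_XWJ_law_w[measurable]:
  "(\<lambda>q. snd (fst q)) \<in> borel_measurable XWJ_law"
  unfolding measurable_cong_sets[OF sets_XWJ_law refl] by measurable

lemma measurable_XWJ_law_j[measurable]: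
  "snd \<in> measurable XWJ_law (count_space UNIV)"
  unfolding measurable_cong_sets[OF sets_XWJ_law refl] by simp

lemma AE_XWJ_law_support:
  "AE q in XWJ_law. 0 < fst (fst q) \<and> fst (fst q) < snd (fst q) \<and> snd (fst q) < 1"
proof -
  define B where "B = {p :: real \<times> real. \<not> (0 < fst p \<and> fst p < snd p \<and> snd p < 1)}"
  have B: "B \<in> sets (borel \<Otimes>\<^sub>M borel)"
  proof -
    have "{p \<in> space (borel \<Otimes>\<^sub>M borel). \<not> (0 < fst p \<and> fst p < snd p \<and> snd p < (1::real))}
        \<in> sets (borel \<Otimes>\<^sub>M borel)"
      by measurable
    then show ?thesis
      by (simp add: B_def space_pair_measure)
  qed
  have density: "(\<lambda>(x, w). ennreal (if 0 < x \<and> x < w \<and> w < 1 then 6 * x else 0 :: real))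
      \<in> borel_measurable (borel :: (real \<times> real) measure)"
    unfolding borel_prod[symmetric] by measurable
  interpret J: prob_space J_law
    unfolding J_law_def by (rule prob_space_measure_pmf)
  have B_borel: "B \<in> sets borel"
    using B unfolding borel_prod .
  have "emeasure XW_law B = 0"
    unfolding XW_law_def using B_borel density
    by (subst emeasure_density) (auto simp: borel_prod B_def intro!: nn_integral_zero' AE_I2 split: prod.splits)
  then have "emeasure XWJ_law (B \<times> UNIV) = 0"
    using B_borel unfolding XWJ_law_def
    by (subst J.emeasure_pair_measure_Times) (auto simp: XW_law_def J_law_def)
  moreover have "B \<times> UNIV \<in> sets XWJ_law"
    using B by (simp add: sets_XWJ_law)
  ultimately show ?thesis
    by (intro AE_I'[of "B \<times> UNIV"]) (auto simp: B_def null_sets_def)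
qed

lemma hfun_bound:
  assumes "0 < x" "x < w" "w < 1"
  shows "\<bar>hfun j x w\<bar> \<le> 5"
proof -
  have prod_le_4: "0 \<le> u * v \<and> u * v \<le> 4" if "0 \<le> u" "u \<le> 2" "0 \<le> v" "v \<le> 2" for u v :: real
    using that mult_mono[of u 2 v 2] by auto
  show ?thesis
    unfolding hfun_def
    using assms prod_le_4[of w "2 - x - w"] prod_le_4[of "1 + x - w" "2 * w - x"] prod_le_4[of "1 - x" "x + w"]
    by auto
qed

lemma measurable_hfun[measurable (raw)]:
  assumes "j \<in> measurable M (count_space UNIV)" "x \<in> borel_measurable M" "w \<in> borel_measurable M"
  shows "(\<lambda>\<omega>. hfun (j \<omega>) (x \<omega>) (w \<omega>)) \<in> borel_measurable M"
  unfolding hfun_def using assms by measurable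

theorem mainTheorem5:
  fixes N :: "'b measure" and C :: "'b \<Rightarrow> real"
    and M :: "'a measure" and X W :: "nat \<Rightarrow> 'a \<Rightarrow> real" and J :: "nat \<Rightarrow> 'a \<Rightarrow> nat"
  assumes N: "prob_space N"
    and C_meas: "C \<in> borel_measurable N"
    and C_sq: "integrable N (\<lambda>\<omega>. (C \<omega>)\<^sup>2)"
    and C_mean: "prob_space.expectation N C = 19 / 6"
    and C_fix: "distr N borel C =
        distr (XWJ_law \<Otimes>\<^sub>M distr N borel C) borel
          (\<lambda>(((x, w), j), c). x * c + hfun j x w)"
    and M: "prob_space M"
    and meas: "\<And>i. (\<lambda>\<omega>. ((X i \<omega>, W i \<omega>), J i \<omega>)) \<in> measurable M XWJ_law"
    and law: "\<And>i. distr M XWJ_law (\<lambda>\<omega>. ((X i \<omega>, W i \<omega>), J i \<omega>)) = XWJ_law"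
    and indep: "prob_space.indep_vars M (\<lambda>_. XWJ_law)
                  (\<lambda>i \<omega>. ((X i \<omega>, W i \<omega>), J i \<omega>)) UNIV"
  shows "(AE \<omega> in M. summable (\<lambda>j. hfun (J j \<omega>) (X j \<omega>) (W j \<omega>) * (\<Prod>k<j. X k \<omega>)))
       \<and> distr N borel C =
         distr M borel (\<lambda>\<omega>. \<Sum>j. hfun (J j \<omega>) (X j \<omega>) (W j \<omega>) * (\<Prod>k<j. X k \<omega>))"
proof -
  define Z where "Z = (\<lambda>i \<omega>. ((X i \<omega>, W i \<omega>), J i \<omega>))"
  define a where "a = (\<lambda>q :: (real \<times> real) \<times> nat. fst (fst q))"
  define b where "b = (\<lambda>q :: (real \<times> real) \<times> nat. hfun (snd q) (fst (fst q)) (snd (fst q)))"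
  define S where "S = (\<lambda>\<omega>. \<Sum>j. b (Z j \<omega>) * (\<Prod>k<j. a (Z k \<omega>)))"
  have Z_meas[measurable]: "Z i \<in> measurable M XWJ_law" for i
    using meas by (simp add: Z_def)
  have Z_law: "distr M XWJ_law (Z i) = XWJ_law" for i
    using law by (simp add: Z_def)
  have Z_indep: "prob_space.indep_vars M (\<lambda>_. XWJ_law) Z UNIV"
    using indep by (simp add: Z_def)
  have ab_meas[measurable]: "a \<in> borel_measurable XWJ_law" "b \<in> borel_measurable XWJ_law"
    by (simp_all add: a_def b_def)
  have "AE q in XWJ_law. 0 \<le> a q \<and> a q < 1" "AE q in XWJ_law. \<bar>b q\<bar> \<le> 5"
    using AE_XWJ_law_support by (auto simp: a_def b_def hfun_bound elim: AE_mp)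
  then have limit: "AE \<omega> in M. summable (\<lambda>j. b (Z j \<omega>) * (\<Prod>k<j. a (Z k \<omega>)))
      \<and> (\<forall>c. (\<lambda>n. backward_iterate (\<lambda>q c. a q * c + b q) n (\<lambda>k. Z k \<omega>) c) \<longlonglongrightarrow> S \<omega>)"
    unfolding S_def by (rule prob_space.AE_backward_iterate_affine_LIMSEQ[OF M Z_meas Z_law Z_indep ab_meas])
  have "distr M borel S = distr N borel C"
  proof (rule prob_space.distr_backward_iterate_limit[OF M])
    show "distr N borel C = distr (XWJ_law \<Otimes>\<^sub>M distr N borel C) borel (\<lambda>(q, c). a q * c + b q)"
      using C_fix by (simp add: a_def b_def split_beta' case_prod_beta')
  qed (use N C_meas limit Z_law Z_indep in \<open>auto simp: S_def prob_space.prob_space_distr elim: AE_mp\<close>)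
  with limit show ?thesis
    by (auto simp: S_def Z_def a_def b_def elim: AE_mp)
qed

end
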